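(* Let $\mathsf{op}_0\mathsf{op}_1\cdots\mathsf{op}_n$ be a nonempty sequence over the alphabet $\{\uparrow_1,\uparrow_2,\downarrow_1,\downarrow_2,\Downarrow\}$ which is valid, i.e. applying the operations successively to the empty order-2 stack $[[\,]]$ is defined at every step. Let $L_1$ and $L_2$ be the languages generated by the nonterminals $S_1$ and $S_2$ of the context-free grammar $$S_1 \to \uparrow_1 \mid S_1\uparrow_2 \mid S_1S_1\downarrow_1 \mid S_1S_2\downarrow_2 \mid S_1S_2S_1\Downarrow,\qquad S_2\to \uparrow_2 \mid S_2\uparrow_1 \mid S_2\downarrow_1 \mid S_2S_2\downarrow_2 \mid S_2S_2S_1\Downarrow .$$ Then for all $0\le i\le j\le n$: (P1) $\mathsf{push}_1(j)=i$ iff $\mathsf{op}_i\cdots\mathsf{op}_j\in L_1$; (P2) $\mathsf{Push}_2(j)=i$ iff $\mathsf{op}_i\cdots\mathsf{op}_j\in L_2$; (P3) $\mathsf{push}_1(j)=-1$ iff $\mathsf{op}_k\cdots\mathsf{op}_j\notin L_1$ for all $0\le k\le j$; (P4) $\mathsf{Push}_2(j)=-1$ iff $\mathsf{op}_k\cdots\mathsf{op}_j\notin L_2$ for all $0\le k\le j$.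
   Context: Order-2 collapsible stacks over a finite set $S$ of stack symbols: an order-2 stack is $W=[[u_1][u_2]\cdots[u_n]]$ ($n\ge1$) where each $u_i$ is a word over $S\times\{0,1,\dots,i-1\}$ (the second component is a collapse link to the index of a stack below). The empty order-2 stack is $[[\,]]$ (one empty order-1 stack). Operations: $\uparrow_2$ (order-2 push) duplicates the topmost stack: $[[u_1]\cdots[u_n]]\mapsto[[u_1]\cdots[u_n][u_n]]$; $\downarrow_2$ (order-2 pop) removes the topmost stack, undefined if $n=1$; $\uparrow_1$ (order-1 push of some symbol $s$, the symbol being irrelevant here) maps $[[u_1]\cdots[u_n]]$ to $[[u_1]\cdots[u_n(s,n-1)]]$; $\downarrow_1$ (order-1 pop) removes the last letter of $u_n$, undefined if $u_n$ is empty; $\Downarrow$ (collapse): if $u_n=u_n'(s,i)$ then $[[u_1]\cdots[u_n]]\mapsto[[u_1]\cdots[u_i]]$ (undefined if $u_n$ empty or $i=0$). For a valid sequence and $0\le j\le n$, $\mathsf{push}_1(j)$ is the position $i$ of the $\uparrow_1$ operation that pushed the top symbol of the top order-1 stack present after executing $\mathsf{op}_j$, and $\mathsf{push}_1(j)=-1$ if that top order-1 stack is empty; $\mathsf{Push}_2(j)$ is the position of the $\uparrow_2$ operation that pushed (duplicated) the top order-1 stack present after executing $\mathsf{op}_j$, and $\mathsf{Push}_2(j)=-1$ if the order-2 stack then contains only one order-1 stack. *)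

theory Defs
  imports Main
begin

datatype op = Up1 | Up2 | Down1 | Down2 | Collapse

text \<open>An order-1 stack entry records its collapse link and the position of the
  order-1 push that created it (the stack symbol itself is irrelevant and omitted).
  An order-1 stack inside an order-2 stack is tagged with the position of the
  order-2 push that created it (-1 for the initial order-1 stack).
  The order-2 stack is a list, bottom first.\<close>

type_synonym entry = "nat \<times> nat"
type_synonym stack1 = "int \<times> entry list"
type_synonym stack2 = "stack1 list"

definition empty2 :: stack2 where "empty2 = [(-1, [])]"

fun step :: "nat \<Rightarrow> op \<Rightarrow> stack2 \<Rightarrow> stack2 option" where
  "step p Up1 W = (if W = [] then None else
      Some (butlast W @ [(fst (last W), snd (last W) @ [(length W - 1, p)])]))"
| "step p Up2 W = (if W = [] then None else Some (W @ [(int p, snd (last W))]))"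
| "step p Down2 W = (if length W \<le> 1 then None else Some (butlast W))"
| "step p Down1 W = (if W = [] \<or> snd (last W) = [] then None else
      Some (butlast W @ [(fst (last W), butlast (snd (last W)))]))"
| "step p Collapse W = (if W = [] \<or> snd (last W) = [] \<or> fst (last (snd (last W))) = 0 then None
      else Some (take (fst (last (snd (last W)))) W))"

fun exec_from :: "nat \<Rightarrow> op list \<Rightarrow> stack2 \<Rightarrow> stack2 option" where
  "exec_from p [] W = Some W"
| "exec_from p (x # xs) W = (case step p x W of None \<Rightarrow> None | Some W' \<Rightarrow> exec_from (Suc p) xs W')"

definition valid :: "op list \<Rightarrow> bool" where
  "valid ops \<longleftrightarrow> exec_from 0 ops empty2 \<noteq> None"

text \<open>The order-2 stack present after executing op_j (i.e. after op_0 ... op_j).\<close>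
definition state_after :: "op list \<Rightarrow> nat \<Rightarrow> stack2" where
  "state_after ops j = the (exec_from 0 (take (Suc j) ops) empty2)"

definition push1 :: "op list \<Rightarrow> nat \<Rightarrow> int" where
  "push1 ops j = (let w = snd (last (state_after ops j)) in
      if w = [] then -1 else int (snd (last w)))"

definition Push2 :: "op list \<Rightarrow> nat \<Rightarrow> int" where
  "Push2 ops j = (let W = state_after ops j in
      if length W = 1 then -1 else fst (last W))"

inductive L1 :: "op list \<Rightarrow> bool" and L2 :: "op list \<Rightarrow> bool" where
  "L1 [Up1]"
| "L1 x \<Longrightarrow> L1 (x @ [Up2])"
| "L1 x \<Longrightarrow> L1 y \<Longrightarrow> L1 (x @ y @ [Down1])"
| "L1 x \<Longrightarrow> L2 y \<Longrightarrow> L1 (x @ y @ [Down2])"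
| "L1 x \<Longrightarrow> L2 y \<Longrightarrow> L1 z \<Longrightarrow> L1 (x @ y @ z @ [Collapse])"
| "L2 [Up2]"
| "L2 x \<Longrightarrow> L2 (x @ [Up1])"
| "L2 x \<Longrightarrow> L2 (x @ [Down1])"
| "L2 x \<Longrightarrow> L2 y \<Longrightarrow> L2 (x @ y @ [Down2])"
| "L2 x \<Longrightarrow> L2 y \<Longrightarrow> L1 z \<Longrightarrow> L2 (x @ y @ z @ [Collapse])"

definition seg :: "op list \<Rightarrow> nat \<Rightarrow> nat \<Rightarrow> op list" where
  "seg ops i j = drop i (take (Suc j) ops)"

end

theory Submission
  imports Defs
begin

text \<open>Write H t for the order-2 stack after the first t operations. Along a valid run the stack
  remembers its own history: an order-1 stack created by the order-2 push at time t lies on top of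
  exactly H t minus its top stack, and a symbol pushed by the order-1 push at time p lies on top
  of the order-1 stack that was topmost in H p, with a collapse link leading back to H p minus its
  top stack. This invariant is preserved by every operation, so order-1 pops, order-2 pops and
  collapses restore stacks seen earlier. The grammar rules are then exactly the recurrences
  satisfied by the push times: every word of L1 (L2) ending at time j starts at push1 j (Push2 j),
  by induction on the grammar, and conversely the segment from push1 j (Push2 j) to j is derived,
  by strong induction on j.\<close>

abbreviation top1 :: "stack2 \<Rightarrow> entry list" where "top1 W \<equiv> snd (last W)"
abbreviation top_tag :: "stack2 \<Rightarrow> int" where "top_tag W \<equiv> fst (last W)"
abbreviation top_push :: "stack2 \<Rightarrow> nat" where "top_push W \<equiv> snd (last (top1 W))"
abbreviation top_link :: "stack2 \<Rightarrow> nat" where "top_link W \<equiv> fst (last (top1 W))"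

text \<open>segment ops a b is the half-open infix op_a ... op_(b-1), so seg ops i j = segment ops i (Suc j).\<close>

definition segment :: "op list \<Rightarrow> nat \<Rightarrow> nat \<Rightarrow> op list" where
  "segment ops a b = drop a (take b ops)"

lemma segment_append:
  assumes "a \<le> b" "b \<le> c"
  shows "segment ops a b @ segment ops b c = segment ops a c"
proof (cases "b \<le> length ops")
  case True
  have "take c ops = take b ops @ drop b (take c ops)"
    using append_take_drop_id[of b "take c ops"] assms(2) by (simp add: min_def)
  then have "segment ops a c = drop a (take b ops @ drop b (take c ops))"
    unfolding segment_def by (rule arg_cong)
  also have "\<dots> = segment ops a b @ segment ops b c"
    unfolding segment_def using True assms(1) by simp
  finally show ?thesis by simp
next
  case False
  then show ?thesis
    using assms unfolding segment_def by simp
qed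

lemma segment_snoc:
  "a \<le> b \<Longrightarrow> b < length ops \<Longrightarrow> segment ops a (Suc b) = segment ops a b @ [ops ! b]"
  unfolding segment_def by (simp add: take_Suc_conv_app_nth)

lemma segment_split:
  assumes "segment ops i e = x @ y"
  shows "segment ops i (i + length x) = x \<and> segment ops (i + length x) e = y"
proof -
  define n where "n = e - i"
  have xy: "take n (drop i ops) = x @ y"
    using assms by (simp add: segment_def drop_take n_def)
  have "length x \<le> n"
    using arg_cong[OF xy, of length] by simp
  then have "take (length x) (drop i ops) = x"
    using arg_cong[OF xy, of "take (length x)"] by (simp add: min_def)
  moreover have "take (n - length x) (drop (i + length x) ops) = y"
    using arg_cong[OF xy, of "drop (length x)"] by (simp add: drop_take add.commute)
  ultimately show ?thesis
    by (simp add: segment_def drop_take n_def)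
qed

lemma segment_eq_snoc:
  assumes "segment ops i e = x @ [c]" "e \<le> length ops"
  obtains m where "segment ops i m = x" "i \<le> m" "e = Suc m" "ops ! m = c"
proof -
  have "length (segment ops i e) = e - i"
    using assms(2) by (simp add: segment_def)
  then have e: "e = Suc (i + length x)"
    using assms(1) by simp
  have "segment ops i e ! length x = ops ! (i + length x)"
    using e assms(2) by (simp add: segment_def)
  then show ?thesis
    using e assms(1) segment_split[OF assms(1)] by (intro that[of "i + length x"]) simp_all
qed

lemma segment_eq_append_snoc:
  assumes "segment ops i e = x @ y @ [c]" "e \<le> length ops"
  obtains m n where "segment ops i m = x" "segment ops m n = y" "i \<le> m" "m \<le> n"
    "e = Suc n" "ops ! n = c"
proof -
  have "segment ops i (i + length x) = x" "segment ops (i + length x) e = y @ [c]"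
    using segment_split[OF assms(1)] by simp_all
  then show ?thesis
    using that segment_eq_snoc[OF _ assms(2)] le_add1 by metis
qed

lemma segment_eq_append3_snoc:
  assumes "segment ops i e = x @ y @ z @ [c]" "e \<le> length ops"
  obtains m r n where "segment ops i m = x" "segment ops m r = y" "segment ops r n = z"
    "i \<le> m" "m \<le> r" "r \<le> n" "e = Suc n" "ops ! n = c"
proof -
  have "segment ops i (i + length x) = x" "segment ops (i + length x) e = y @ z @ [c]"
    using segment_split[OF assms(1)] by simp_all
  then show ?thesis
    using that segment_eq_append_snoc[OF _ assms(2)] le_add1 by metis
qed

lemma snoc_eq_append_Cons_iff:
  "(W @ [x] = V @ s # R) \<longleftrightarrow> (R = [] \<and> V = W \<and> s = x) \<or> (\<exists>R'. R = R' @ [x] \<and> W = V @ s # R')"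
  by (cases R rule: rev_cases) auto

definition consistent_entry :: "(nat \<Rightarrow> stack2) \<Rightarrow> nat \<Rightarrow> stack2 \<Rightarrow> entry list \<Rightarrow> entry \<Rightarrow> bool" where
  "consistent_entry H k V u e \<longleftrightarrow>
     snd e < k \<and> fst e \<le> length V \<and> top1 (H (snd e)) = u \<and> butlast (H (snd e)) = take (fst e) V"

definition consistent_stack1 :: "(nat \<Rightarrow> stack2) \<Rightarrow> nat \<Rightarrow> stack2 \<Rightarrow> stack1 \<Rightarrow> bool" where
  "consistent_stack1 H k V s \<longleftrightarrow>
     (if V = [] then fst s = -1 else \<exists>t<k. fst s = int t \<and> H t = V) \<and>
     (\<forall>u e v. snd s = u @ e # v \<longrightarrow> consistent_entry H k V u e)"

definition consistent :: "(nat \<Rightarrow> stack2) \<Rightarrow> nat \<Rightarrow> stack2 \<Rightarrow> bool" where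
  "consistent H k W \<longleftrightarrow> W \<noteq> [] \<and> (\<forall>V s R. W = V @ s # R \<longrightarrow> consistent_stack1 H k V s)"

lemma consistent_entry_mono:
  "consistent_entry H k V u e \<Longrightarrow> k \<le> k' \<Longrightarrow> consistent_entry H k' (V @ X) u e"
  unfolding consistent_entry_def by auto

lemma consistent_stack1_mono:
  "consistent_stack1 H k V s \<Longrightarrow> k \<le> k' \<Longrightarrow> consistent_stack1 H k' V s"
  unfolding consistent_stack1_def by (metis append_Nil2 consistent_entry_mono order.strict_trans2)

lemma consistent_mono: "consistent H k W \<Longrightarrow> k \<le> k' \<Longrightarrow> consistent H k' W"
  unfolding consistent_def using consistent_stack1_mono by blast

lemma consistent_stack1_snoc:
  "consistent_stack1 H k V (f, w @ [e]) \<longleftrightarrow> consistent_stack1 H k V (f, w) \<and> consistent_entry H k V w e"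
  unfolding consistent_stack1_def by (auto simp: snoc_eq_append_Cons_iff simp del: split_paired_All split_paired_Ex)

lemma consistent_stack1_take:
  "consistent_stack1 H k V (f, w) \<Longrightarrow> consistent_stack1 H k V (f, take n w)"
  unfolding consistent_stack1_def by (metis append.assoc append_Cons append_take_drop_id snd_conv fst_conv)

lemma consistent_snoc:
  "consistent H k (V @ [s]) \<longleftrightarrow> (V = [] \<or> consistent H k V) \<and> consistent_stack1 H k V s"
  unfolding consistent_def by (auto simp: snoc_eq_append_Cons_iff simp del: split_paired_All split_paired_Ex)

lemma consistent_take: "consistent H k W \<Longrightarrow> 0 < n \<Longrightarrow> consistent H k (take n W)"
  unfolding consistent_def by (metis append.assoc append_Cons append_take_drop_id take_eq_Nil neq0_conv)

lemma consistent_empty2: "consistent H 0 empty2"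
  unfolding consistent_def consistent_stack1_def empty2_def by (auto simp: Cons_eq_append_conv)

lemma consistent_Up1:
  assumes "consistent H k W" "H k = W"
  shows "consistent H (Suc k) (butlast W @ [(top_tag W, top1 W @ [(length W - 1, k)])])"
proof -
  obtain V f w where W: "W = V @ [(f, w)]"
    using assms(1) unfolding consistent_def by (metis rev_exhaust surj_pair)
  have "(V = [] \<or> consistent H (Suc k) V) \<and> consistent_stack1 H (Suc k) V (f, w)"
    using assms(1) consistent_mono consistent_stack1_mono unfolding W consistent_snoc by (metis le_SucI order_refl)
  moreover have "consistent_entry H (Suc k) V w (length V, k)"
    using assms(2) unfolding W consistent_entry_def by simp
  ultimately show ?thesis
    unfolding W by (simp add: consistent_snoc consistent_stack1_snoc)
qed

lemma consistent_Up2: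
  assumes "consistent H k W" "H k = W"
  shows "consistent H (Suc k) (W @ [(int k, top1 W)])"
proof -
  obtain V f w where W: "W = V @ [(f, w)]"
    using assms(1) unfolding consistent_def by (metis rev_exhaust surj_pair)
  have "consistent_stack1 H k V (f, w)"
    using assms(1) unfolding W consistent_snoc by blast
  then have "\<forall>u e v. w = u @ e # v \<longrightarrow> consistent_entry H (Suc k) W u e"
    unfolding W consistent_stack1_def using consistent_entry_mono[of H k V _ _ "Suc k"] by auto
  then have "consistent_stack1 H (Suc k) W (int k, top1 W)"
    using assms(2) unfolding consistent_stack1_def W by auto
  then show ?thesis
    using consistent_mono[OF assms(1)] by (simp add: consistent_snoc)
qed

lemma consistent_Down1:
  assumes "consistent H k W"
  shows "consistent H k (butlast W @ [(top_tag W, butlast (top1 W))])"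
proof -
  obtain V f w where W: "W = V @ [(f, w)]"
    using assms(1) unfolding consistent_def by (metis rev_exhaust surj_pair)
  show ?thesis
    using assms consistent_stack1_take[of H k V f w "length w - 1"]
    unfolding W consistent_snoc by (simp add: butlast_conv_take)
qed

lemma consistent_step:
  assumes "consistent H k W" "H k = W" "step k x W = Some W'"
  shows "consistent H (Suc k) W'"
proof (cases x)
  case Up1
  then show ?thesis using assms consistent_Up1 by (auto split: if_splits)
next
  case Up2
  then show ?thesis using assms consistent_Up2 by (auto split: if_splits)
next
  case Down1
  then show ?thesis using assms consistent_Down1 consistent_mono by (auto split: if_splits)
next
  case Down2
  then have "W' = take (length W - 1) W" "0 < length W - 1"
    using assms(3) by (auto simp: butlast_conv_take split: if_splits)
  then show ?thesis using assms(1) consistent_take consistent_mono by (metis le_SucI order_refl)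
next
  case Collapse
  then have "W' = take (top_link W) W" "0 < top_link W"
    using assms(3) by (auto split: if_splits)
  then show ?thesis using assms(1) consistent_take consistent_mono by (metis le_SucI order_refl)
qed

lemma exec_from_append:
  "exec_from p (xs @ ys) W =
     (case exec_from p xs W of None \<Rightarrow> None | Some W' \<Rightarrow> exec_from (p + length xs) ys W')"
  by (induction xs arbitrary: p W) (auto split: option.splits)

text \<open>stack_at ops k is the stack after the first k operations, i.e. state_after ops j =
  stack_at ops (Suc j).\<close>

definition stack_at :: "op list \<Rightarrow> nat \<Rightarrow> stack2" where
  "stack_at ops k = the (exec_from 0 (take k ops) empty2)"

lemma exec_from_take:
  assumes "valid ops" "k \<le> length ops"
  shows "exec_from 0 (take k ops) empty2 = Some (stack_at ops k)"
proof -
  have "exec_from 0 (take k ops @ drop k ops) empty2 \<noteq> None"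
    using assms(1) by (simp add: valid_def)
  then show ?thesis
    unfolding stack_at_def exec_from_append by (auto split: option.splits)
qed

lemma step_stack_at:
  assumes "valid ops" "k < length ops"
  shows "step k (ops ! k) (stack_at ops k) = Some (stack_at ops (Suc k))"
  using exec_from_take[OF assms(1), of "Suc k"] exec_from_take[OF assms(1), of k] assms(2)
  by (simp add: take_Suc_conv_app_nth exec_from_append split: option.splits)

lemma consistent_stack_at:
  assumes "valid ops" "k \<le> length ops"
  shows "consistent (stack_at ops) k (stack_at ops k)"
  using assms(2)
proof (induction k)
  case 0
  then show ?case by (simp add: stack_at_def consistent_empty2)
next
  case (Suc k)
  then have "k < length ops" "consistent (stack_at ops) k (stack_at ops k)"
    by simp_all
  then show ?case
    using consistent_step[of "stack_at ops" k _ "ops ! k"] step_stack_at[OF assms(1)] by blast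
qed

lemma consistent_top_push:
  assumes "consistent H k W" "top1 W \<noteq> []"
  shows "top_push W < k \<and> top1 (H (top_push W)) = butlast (top1 W)
    \<and> butlast (H (top_push W)) = take (top_link W) W"
proof -
  obtain V f w where W: "W = V @ [(f, w)]"
    using assms(1) unfolding consistent_def by (metis rev_exhaust surj_pair)
  obtain u e where w: "w = u @ [e]"
    using assms(2) W by (cases w rule: rev_cases) auto
  have "consistent_entry H k V u e"
    using assms(1) unfolding W w consistent_snoc consistent_stack1_snoc by blast
  then show ?thesis
    unfolding W w consistent_entry_def by simp
qed

lemma consistent_top_tag:
  assumes "consistent H k W" "length W \<noteq> 1"
  shows "\<exists>t<k. top_tag W = int t \<and> H t = butlast W"
proof -
  obtain V s where W: "W = V @ [s]"
    using assms(1) unfolding consistent_def by (metis rev_exhaust)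
  then show ?thesis
    using assms unfolding W consistent_snoc consistent_stack1_def by auto
qed

lemma consistent_top_tag_single:
  assumes "consistent H k W" "length W = 1"
  shows "top_tag W = -1"
proof -
  obtain s where W: "W = [] @ [s]"
    using assms(2) by (cases W) auto
  show ?thesis
    using assms(1) unfolding W consistent_snoc consistent_stack1_def by simp
qed

locale valid_run =
  fixes ops :: "op list"
  assumes valid: "valid ops"
begin

abbreviation S :: "nat \<Rightarrow> stack2" where "S \<equiv> stack_at ops"

lemma consistent_S: "k \<le> length ops \<Longrightarrow> consistent S k (S k)"
  using consistent_stack_at[OF valid] .

lemma S_nonempty: "k \<le> length ops \<Longrightarrow> S k \<noteq> []"
  using consistent_S unfolding consistent_def by blast

lemma top_push_history:
  "k \<le> length ops \<Longrightarrow> top1 (S k) \<noteq> [] \<Longrightarrow>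
     top_push (S k) < k \<and> top1 (S (top_push (S k))) = butlast (top1 (S k))
     \<and> butlast (S (top_push (S k))) = take (top_link (S k)) (S k)"
  using consistent_top_push[OF consistent_S] .

lemma top_tag_history:
  assumes "k \<le> length ops" "top_tag (S k) = int t"
  shows "t < k \<and> S t = butlast (S k)"
proof -
  have "length (S k) \<noteq> 1"
    using consistent_top_tag_single[OF consistent_S[OF assms(1)]] assms(2) by auto
  then show ?thesis
    using consistent_top_tag[OF consistent_S[OF assms(1)]] assms(2) by auto
qed

lemma stack_at_Suc_Up1:
  assumes "k < length ops" "ops ! k = Up1"
  shows "top1 (S (Suc k)) = top1 (S k) @ [(length (S k) - 1, k)] \<and> top_tag (S (Suc k)) = top_tag (S k)"
proof -
  have "S (Suc k) = butlast (S k) @ [(top_tag (S k), top1 (S k) @ [(length (S k) - 1, k)])]"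
    using step_stack_at[OF valid assms(1)] S_nonempty[of k] assms by (auto split: if_splits)
  then show ?thesis by simp
qed

lemma stack_at_Suc_Up2:
  assumes "k < length ops" "ops ! k = Up2"
  shows "S (Suc k) = S k @ [(int k, top1 (S k))]"
  using step_stack_at[OF valid assms(1)] S_nonempty[of k] assms by (auto split: if_splits)

lemma stack_at_Suc_Down1:
  assumes "k < length ops" "ops ! k = Down1"
  shows "top1 (S k) \<noteq> [] \<and> top_push (S k) < k \<and> top1 (S (Suc k)) = top1 (S (top_push (S k)))
    \<and> top_tag (S (Suc k)) = top_tag (S k)"
proof -
  have "top1 (S k) \<noteq> [] \<and> S (Suc k) = butlast (S k) @ [(top_tag (S k), butlast (top1 (S k)))]"
    using step_stack_at[OF valid assms(1)] assms(2) by (auto split: if_splits)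
  then show ?thesis
    using top_push_history[of k] assms(1) by simp
qed

lemma stack_at_Suc_Down2:
  assumes "k < length ops" "ops ! k = Down2"
  shows "\<exists>t<k. top_tag (S k) = int t \<and> S (Suc k) = S t"
proof -
  have "length (S k) \<noteq> 1 \<and> S (Suc k) = butlast (S k)"
    using step_stack_at[OF valid assms(1)] assms(2) by (auto split: if_splits)
  then show ?thesis
    using consistent_top_tag[OF consistent_S, of k] assms(1) by auto
qed

lemma stack_at_Suc_Collapse:
  assumes "k < length ops" "ops ! k = Collapse"
  shows "top1 (S k) \<noteq> [] \<and> top_push (S k) < k \<and> S (Suc k) = butlast (S (top_push (S k)))"
proof -
  have "top1 (S k) \<noteq> [] \<and> S (Suc k) = take (top_link (S k)) (S k)"
    using step_stack_at[OF valid assms(1)] assms(2) by (auto split: if_splits)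
  then show ?thesis
    using top_push_history[of k] assms(1) by simp
qed

lemma stack_at_Suc_Down2_eq:
  assumes "n < length ops" "ops ! n = Down2" "top_tag (S n) = int m"
  shows "S (Suc n) = S m"
  using stack_at_Suc_Down2[OF assms(1,2)] assms(3) by auto

lemma stack_at_Suc_Collapse_eq:
  assumes "n < length ops" "ops ! n = Collapse" "top_push (S n) = r" "top_tag (S r) = int m"
  shows "S (Suc n) = S m"
proof -
  have "S (Suc n) = butlast (S r)" "r < n"
    using stack_at_Suc_Collapse[OF assms(1,2)] assms(3) by simp_all
  then show ?thesis
    using top_tag_history[of r m] assms(1,4) by simp
qed

lemma L1_L2_sound:
  shows "L1 w \<Longrightarrow> segment ops i e = w \<Longrightarrow> e \<le> length ops \<Longrightarrow> top1 (S e) \<noteq> [] \<and> top_push (S e) = i"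
    and "L2 w \<Longrightarrow> segment ops i e = w \<Longrightarrow> e \<le> length ops \<Longrightarrow> top_tag (S e) = int i"
proof (induction w and w arbitrary: i e and i e rule: L1_L2.inducts)
  case 1
  then obtain m where "i = m" "e = Suc m" "ops ! m = Up1"
    using segment_eq_snoc[of ops i e "[]"] by (auto simp: segment_def)
  then show ?case using stack_at_Suc_Up1 "1.prems" by simp
next
  case (2 x)
  obtain m where "segment ops i m = x" "i \<le> m" "e = Suc m" "ops ! m = Up2"
    using "2.prems" by (rule segment_eq_snoc)
  then show ?case using "2.IH" "2.prems" stack_at_Suc_Up2[of m] by simp
next
  case (3 x y)
  obtain m n where "segment ops i m = x" "segment ops m n = y" "i \<le> m" "m \<le> n"
      "e = Suc n" "ops ! n = Down1"
    using "3.prems" by (rule segment_eq_append_snoc)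
  then show ?case using "3.IH" "3.prems"(2) stack_at_Suc_Down1[of n] by simp
next
  case (4 x y)
  obtain m n where "segment ops i m = x" "segment ops m n = y" "i \<le> m" "m \<le> n"
      "e = Suc n" "ops ! n = Down2"
    using "4.prems" by (rule segment_eq_append_snoc)
  then show ?case using "4.IH" "4.prems"(2) stack_at_Suc_Down2_eq[of n m] by simp
next
  case (5 x y z)
  obtain m r n where "segment ops i m = x" "segment ops m r = y" "segment ops r n = z"
      "i \<le> m" "m \<le> r" "r \<le> n" "e = Suc n" "ops ! n = Collapse"
    using "5.prems" by (rule segment_eq_append3_snoc)
  then show ?case using "5.IH" "5.prems"(2) stack_at_Suc_Collapse_eq[of n r m] by simp
next
  case 6
  then obtain m where "i = m" "e = Suc m" "ops ! m = Up2"
    using segment_eq_snoc[of ops i e "[]"] by (auto simp: segment_def)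
  then show ?case using stack_at_Suc_Up2 "6.prems" by simp
next
  case (7 x)
  obtain m where "segment ops i m = x" "i \<le> m" "e = Suc m" "ops ! m = Up1"
    using "7.prems" by (rule segment_eq_snoc)
  then show ?case using "7.IH" "7.prems" stack_at_Suc_Up1[of m] by simp
next
  case (8 x)
  obtain m where "segment ops i m = x" "i \<le> m" "e = Suc m" "ops ! m = Down1"
    using "8.prems" by (rule segment_eq_snoc)
  then show ?case using "8.IH" "8.prems" stack_at_Suc_Down1[of m] by simp
next
  case (9 x y)
  obtain m n where "segment ops i m = x" "segment ops m n = y" "i \<le> m" "m \<le> n"
      "e = Suc n" "ops ! n = Down2"
    using "9.prems" by (rule segment_eq_append_snoc)
  then show ?case using "9.IH" "9.prems"(2) stack_at_Suc_Down2_eq[of n m] by simp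
next
  case (10 x y z)
  obtain m r n where "segment ops i m = x" "segment ops m r = y" "segment ops r n = z"
      "i \<le> m" "m \<le> r" "r \<le> n" "e = Suc n" "ops ! n = Collapse"
    using "10.prems" by (rule segment_eq_append3_snoc)
  then show ?case using "10.IH" "10.prems"(2) stack_at_Suc_Collapse_eq[of n r m] by simp
qed

end

definition neutral_suffix :: "op list \<Rightarrow> bool" where
  "neutral_suffix w \<longleftrightarrow> (\<forall>x. L1 x \<longrightarrow> L1 (x @ w)) \<and> (\<forall>x. L2 x \<longrightarrow> L2 (x @ w))"

lemma neutral_suffix_Down2: "L2 y \<Longrightarrow> neutral_suffix (y @ [Down2])"
  unfolding neutral_suffix_def using L1_L2.intros(4,9) by simp

lemma neutral_suffix_Collapse: "L2 y \<Longrightarrow> L1 z \<Longrightarrow> neutral_suffix (y @ z @ [Collapse])"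
  unfolding neutral_suffix_def using L1_L2.intros(5,10) by simp

definition derivable_at :: "op list \<Rightarrow> nat \<Rightarrow> bool" where
  "derivable_at ops k \<longleftrightarrow>
     (top1 (stack_at ops k) \<noteq> [] \<longrightarrow> L1 (segment ops (top_push (stack_at ops k)) k)) \<and>
     (\<forall>t. top_tag (stack_at ops k) = int t \<longrightarrow> L2 (segment ops t k))"

context valid_run
begin

lemma derivable_at_return:
  assumes "derivable_at ops t" "S k = S t" "t \<le> k" "k \<le> length ops"
    and "neutral_suffix (segment ops t k)"
  shows "derivable_at ops k"
  unfolding derivable_at_def
proof (intro conjI allI impI)
  assume "top1 (S k) \<noteq> []"
  then have "top_push (S t) < t" "L1 (segment ops (top_push (S t)) t)"
    using assms(1-4) top_push_history[of t] unfolding derivable_at_def by auto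
  then show "L1 (segment ops (top_push (S k)) k)"
    using assms(2,3,5) segment_append[of "top_push (S t)" t k ops]
    unfolding neutral_suffix_def by auto
next
  fix u assume "top_tag (S k) = int u"
  then have "u < t" "L2 (segment ops u t)"
    using assms(1-4) top_tag_history[of t u] unfolding derivable_at_def by auto
  then show "L2 (segment ops u k)"
    using assms(3,5) segment_append[of u t k ops]
    unfolding neutral_suffix_def by auto
qed

lemma derivable_at_Suc_Down1:
  assumes IH: "\<And>q. q \<le> j \<Longrightarrow> derivable_at ops q" and j: "j < length ops"
    and op: "ops ! j = Down1"
  shows "derivable_at ops (Suc j)"
proof -
  define q where "q = top_push (S j)"
  have q: "q < j" "top1 (S (Suc j)) = top1 (S q)" "top_tag (S (Suc j)) = top_tag (S j)"
    "L1 (segment ops q j)"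
    using stack_at_Suc_Down1[OF j op] IH[of j] unfolding q_def derivable_at_def by simp_all
  have "L1 (segment ops (top_push (S q)) (Suc j))" if "top1 (S q) \<noteq> []"
  proof -
    have "top_push (S q) < q" "L1 (segment ops (top_push (S q)) q)"
      using that IH[of q] top_push_history[of q] q j unfolding derivable_at_def by simp_all
    moreover have "segment ops (top_push (S q)) (Suc j)
        = segment ops (top_push (S q)) q @ segment ops q j @ [Down1]"
      using segment_append[of "top_push (S q)" q j ops] segment_snoc[of "top_push (S q)" j ops]
        calculation q j op by simp
    ultimately show ?thesis
      using q(4) L1_L2.intros(3) by simp
  qed
  moreover have "L2 (segment ops t (Suc j))" if "top_tag (S j) = int t" for t
    using that IH[of j] top_tag_history[of j t] segment_snoc[of t j ops] j op L1_L2.intros(8)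
    unfolding derivable_at_def by simp
  ultimately show ?thesis
    using q unfolding derivable_at_def by simp
qed

lemma derivable_at_Suc_Collapse:
  assumes IH: "\<And>q. q \<le> j \<Longrightarrow> derivable_at ops q" and j: "j < length ops"
    and op: "ops ! j = Collapse"
  shows "derivable_at ops (Suc j)"
proof -
  define s where "s = top_push (S j)"
  have s: "s < j" "S (Suc j) = butlast (S s)" "L1 (segment ops s j)"
    using stack_at_Suc_Collapse[OF j op] IH[of j] unfolding s_def derivable_at_def by simp_all
  have "butlast (S s) \<noteq> []"
    using S_nonempty[of "Suc j"] s(2) j by simp
  then have "length (S s) \<noteq> 1"
    by (cases "S s") auto
  then obtain t where t: "t < s" "top_tag (S s) = int t" "S t = butlast (S s)"
    using consistent_top_tag[OF consistent_S] s(1) j by (meson less_imp_le_nat order.strict_trans)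
  have "segment ops t (Suc j) = segment ops t s @ segment ops s j @ [Collapse]"
    using segment_append[of t s j ops] segment_snoc[of t j ops] t(1) s(1) j op by simp
  moreover have "L2 (segment ops t s)"
    using IH[of s] t s(1) unfolding derivable_at_def by simp
  ultimately have "neutral_suffix (segment ops t (Suc j))"
    using neutral_suffix_Collapse s(3) by simp
  then show ?thesis
    using derivable_at_return[of t "Suc j"] IH[of t] t s j by simp
qed

lemma derivable_at_Suc:
  assumes IH: "\<And>q. q \<le> j \<Longrightarrow> derivable_at ops q" and j: "j < length ops"
  shows "derivable_at ops (Suc j)"
proof (cases "ops ! j")
  case Up1
  have "top1 (S (Suc j)) = top1 (S j) @ [(length (S j) - 1, j)]" "top_tag (S (Suc j)) = top_tag (S j)"
    using stack_at_Suc_Up1[OF j Up1] by simp_all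
  moreover have "L1 (segment ops j (Suc j))"
    using segment_snoc[of j j ops] j Up1 L1_L2.intros(1) by (simp add: segment_def)
  moreover have "L2 (segment ops t (Suc j))" if "top_tag (S j) = int t" for t
    using that IH[of j] top_tag_history[of j t] segment_snoc[of t j ops] j Up1 L1_L2.intros(7)
    unfolding derivable_at_def by simp
  ultimately show ?thesis
    unfolding derivable_at_def by simp
next
  case Up2
  have "L1 (segment ops (top_push (S j)) (Suc j))" if "top1 (S j) \<noteq> []"
    using that IH[of j] top_push_history[of j] segment_snoc[of "top_push (S j)" j ops] j Up2 L1_L2.intros(2)
    unfolding derivable_at_def by simp
  moreover have "L2 (segment ops j (Suc j))"
    using segment_snoc[of j j ops] j Up2 L1_L2.intros(6) by (simp add: segment_def)
  ultimately show ?thesis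
    using stack_at_Suc_Up2[OF j Up2] unfolding derivable_at_def by simp
next
  case Down1
  then show ?thesis
    using derivable_at_Suc_Down1 IH j by blast
next
  case Down2
  then obtain t where t: "t < j" "top_tag (S j) = int t" "S (Suc j) = S t"
    using stack_at_Suc_Down2 j by blast
  then have "neutral_suffix (segment ops t (Suc j))"
    using IH[of j] j Down2 segment_snoc[of t j ops] neutral_suffix_Down2
    unfolding derivable_at_def by simp
  then show ?thesis
    using derivable_at_return[of t "Suc j"] IH[of t] t j by simp
next
  case Collapse
  then show ?thesis
    using derivable_at_Suc_Collapse IH j by blast
qed

lemma derivable_at_every_step: "k \<le> length ops \<Longrightarrow> derivable_at ops k"
proof (induction k rule: less_induct)
  case (less k)
  show ?case
  proof (cases k)
    case 0
    then show ?thesis by (simp add: derivable_at_def stack_at_def empty2_def)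
  next
    case (Suc j)
    then show ?thesis
      using derivable_at_Suc less by simp
  qed
qed

lemma push1_eq:
  "push1 ops j = (if top1 (S (Suc j)) = [] then -1 else int (top_push (S (Suc j))))"
  by (simp add: push1_def state_after_def stack_at_def Let_def)

lemma Push2_eq:
  "Push2 ops j = (if length (S (Suc j)) = 1 then -1 else top_tag (S (Suc j)))"
  by (simp add: Push2_def state_after_def stack_at_def Let_def)

lemma seg_eq: "seg ops i j = segment ops i (Suc j)"
  by (simp add: seg_def segment_def)

lemma push1_eq_iff_L1:
  assumes "j < length ops"
  shows "push1 ops j = int i \<longleftrightarrow> L1 (seg ops i j)"
proof
  assume "push1 ops j = int i"
  then have "top1 (S (Suc j)) \<noteq> []" "top_push (S (Suc j)) = i"
    by (auto simp: push1_eq split: if_splits)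
  then show "L1 (seg ops i j)"
    using derivable_at_every_step[of "Suc j"] assms unfolding derivable_at_def seg_eq by simp
next
  assume "L1 (seg ops i j)"
  then show "push1 ops j = int i"
    using L1_L2_sound(1)[of _ i "Suc j"] assms by (simp add: push1_eq seg_eq)
qed

lemma Push2_eq_iff_L2:
  assumes "j < length ops"
  shows "Push2 ops j = int i \<longleftrightarrow> L2 (seg ops i j)"
proof
  assume "Push2 ops j = int i"
  then have "top_tag (S (Suc j)) = int i"
    by (auto simp: Push2_eq split: if_splits)
  then show "L2 (seg ops i j)"
    using derivable_at_every_step[of "Suc j"] assms unfolding derivable_at_def seg_eq by simp
next
  assume "L2 (seg ops i j)"
  then have "top_tag (S (Suc j)) = int i"
    using L1_L2_sound(2)[of _ i "Suc j"] assms by (simp add: seg_eq)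
  moreover have "length (S (Suc j)) \<noteq> 1"
    using consistent_top_tag_single[OF consistent_S, of "Suc j"] calculation assms by auto
  ultimately show "Push2 ops j = int i"
    by (simp add: Push2_eq)
qed

lemma push1_cases:
  assumes "j < length ops"
  shows "push1 ops j = -1 \<or> (\<exists>i\<le>j. push1 ops j = int i)"
  using top_push_history[of "Suc j"] assms by (auto simp: push1_eq)

lemma Push2_cases:
  assumes "j < length ops"
  shows "Push2 ops j = -1 \<or> (\<exists>i\<le>j. Push2 ops j = int i)"
  using consistent_top_tag[OF consistent_S, of "Suc j"] assms
  by (auto simp: Push2_eq less_Suc_eq_le)

end

theorem proposition1:
  fixes ops :: "op list"
  assumes "ops \<noteq> []" and "valid ops"
  shows "\<forall>i j. i \<le> j \<and> j < length ops \<longrightarrow>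
      (push1 ops j = int i \<longleftrightarrow> L1 (seg ops i j)) \<and>
      (Push2 ops j = int i \<longleftrightarrow> L2 (seg ops i j)) \<and>
      (push1 ops j = -1 \<longleftrightarrow> (\<forall>k\<le>j. \<not> L1 (seg ops k j))) \<and>
      (Push2 ops j = -1 \<longleftrightarrow> (\<forall>k\<le>j. \<not> L2 (seg ops k j)))"
proof -
  interpret valid_run ops
    using assms(2) by unfold_locales
  show ?thesis
    using push1_cases Push2_cases
    by (auto simp: push1_eq_iff_L1[symmetric] Push2_eq_iff_L2[symmetric])
qed

end
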